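(* Let $G$ be a pro-group and $\varphi\colon G\to G$ an automorphism in $\operatorname{Pro}(\mathbf{Grp})$ with $\varphi^n=\mathrm{id}_G$ for some integer $n\ge1$. Then there exist a directed set $J$, an inverse system of groups $(G'_j)_{j\in J}$ and automorphisms $\varphi_j$ of $G'_j$ with $\varphi_j^n=\mathrm{id}$ commuting with the transition maps, and an isomorphism $G\cong G'$ in $\operatorname{Pro}(\mathbf{Grp})$ carrying $\varphi$ to the level automorphism $(\varphi_j)_j$.
   Context: For a category $\mathcal C$, $\operatorname{Pro}(\mathcal C)$ is its pro-completion: objects are inverse systems, i.e. functors $X\colon \mathcal I_X^{op}\to\mathcal C$ with $\mathcal I_X$ a small filtered category, and $\operatorname{Hom}_{\operatorname{Pro}(\mathcal C)}(X,Y)=\varprojlim_{j\in\mathcal I_Y}\varinjlim_{i\in\mathcal I_X}\mathcal C(X_i,Y_j)$. A pro-group is an object of $\operatorname{Pro}(\mathbf{Grp})$. *)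

theory Defs
  imports "HOL-Algebra.Group"
begin

record ('i,'m) cat =
  Obj :: "'i set"
  Arr :: "'m set"
  Dom :: "'m \<Rightarrow> 'i"
  Cod :: "'m \<Rightarrow> 'i"
  Comp :: "'m \<Rightarrow> 'm \<Rightarrow> 'm"   (* Comp C g f = g o f *)
  Ident :: "'i \<Rightarrow> 'm"

definition cat_hom :: "('i,'m) cat \<Rightarrow> 'i \<Rightarrow> 'i \<Rightarrow> 'm set" where
  "cat_hom C i j = {f \<in> Arr C. Dom C f = i \<and> Cod C f = j}"

definition category :: "('i,'m) cat \<Rightarrow> bool" where
  "category C \<longleftrightarrow>
     (\<forall>f\<in>Arr C. Dom C f \<in> Obj C \<and> Cod C f \<in> Obj C) \<and>
     (\<forall>i\<in>Obj C. Ident C i \<in> cat_hom C i i) \<and>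
     (\<forall>f\<in>Arr C. \<forall>g\<in>Arr C. Cod C f = Dom C g \<longrightarrow>
         Comp C g f \<in> cat_hom C (Dom C f) (Cod C g)) \<and>
     (\<forall>f\<in>Arr C. Comp C (Ident C (Cod C f)) f = f \<and> Comp C f (Ident C (Dom C f)) = f) \<and>
     (\<forall>f\<in>Arr C. \<forall>g\<in>Arr C. \<forall>h\<in>Arr C. Cod C f = Dom C g \<and> Cod C g = Dom C h \<longrightarrow>
         Comp C h (Comp C g f) = Comp C (Comp C h g) f)"

definition filtered :: "('i,'m) cat \<Rightarrow> bool" where
  "filtered C \<longleftrightarrow> category C \<and> Obj C \<noteq> {} \<and>
     (\<forall>i\<in>Obj C. \<forall>j\<in>Obj C. \<exists>k\<in>Obj C. cat_hom C i k \<noteq> {} \<and> cat_hom C j k \<noteq> {}) \<and>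
     (\<forall>i j u v. u \<in> cat_hom C i j \<and> v \<in> cat_hom C i j \<longrightarrow>
         (\<exists>k w. w \<in> cat_hom C j k \<and> Comp C w u = Comp C w v))"

definition directed_set :: "'j set \<Rightarrow> ('j \<Rightarrow> 'j \<Rightarrow> bool) \<Rightarrow> bool" where
  "directed_set J leq \<longleftrightarrow> J \<noteq> {} \<and>
     (\<forall>a\<in>J. leq a a) \<and>
     (\<forall>a\<in>J. \<forall>b\<in>J. \<forall>c\<in>J. leq a b \<and> leq b c \<longrightarrow> leq a c) \<and>
     (\<forall>a\<in>J. \<forall>b\<in>J. \<exists>c\<in>J. leq a c \<and> leq b c)"

definition dircat :: "'j set \<Rightarrow> ('j \<Rightarrow> 'j \<Rightarrow> bool) \<Rightarrow> ('j, 'j \<times> 'j) cat" where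
  "dircat J leq = \<lparr> Obj = J, Arr = {(a,b). a \<in> J \<and> b \<in> J \<and> leq a b},
      Dom = fst, Cod = snd, Comp = (\<lambda>g f. (fst f, snd g)), Ident = (\<lambda>j. (j,j)) \<rparr>"

text \<open>An inverse system is a functor X : I^op \<rightarrow> Grp, I small filtered.
  pmap X u, for u : i \<rightarrow> j in I, is the group homomorphism X_j \<rightarrow> X_i.\<close>

record ('i,'m,'a) pro_obj =
  pidx :: "('i,'m) cat"
  pgrp :: "'i \<Rightarrow> 'a monoid"
  pmap :: "'m \<Rightarrow> 'a \<Rightarrow> 'a"

definition pro_group :: "('i,'m,'a) pro_obj \<Rightarrow> bool" where
  "pro_group X \<longleftrightarrow> filtered (pidx X) \<and>
     (\<forall>i\<in>Obj (pidx X). group (pgrp X i)) \<and>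
     (\<forall>u\<in>Arr (pidx X). pmap X u \<in> hom (pgrp X (Cod (pidx X) u)) (pgrp X (Dom (pidx X) u))) \<and>
     (\<forall>i\<in>Obj (pidx X). \<forall>x\<in>carrier (pgrp X i). pmap X (Ident (pidx X) i) x = x) \<and>
     (\<forall>u\<in>Arr (pidx X). \<forall>v\<in>Arr (pidx X). Cod (pidx X) u = Dom (pidx X) v \<longrightarrow>
        (\<forall>x\<in>carrier (pgrp X (Cod (pidx X) v)).
            pmap X (Comp (pidx X) v u) x = pmap X u (pmap X v x)))"

text \<open>A representative of a morphism X \<rightarrow> Y assigns to each index j of Y a germ
  (i, f) with f : X_i \<rightarrow> Y_j. Two germs represent the same element of
  colim_i Hom(X_i, Y_j) iff they agree after precomposition with suitable transition maps.\<close>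

definition germ_eq :: "('i,'m,'a,'z) pro_obj_scheme \<Rightarrow> 'i \<times> ('a \<Rightarrow> 'b) \<Rightarrow> 'i \<times> ('a \<Rightarrow> 'b) \<Rightarrow> bool" where
  "germ_eq X g h \<longleftrightarrow> (\<exists>k u u'. u \<in> cat_hom (pidx X) (fst g) k \<and> u' \<in> cat_hom (pidx X) (fst h) k \<and>
      (\<forall>x\<in>carrier (pgrp X k). snd g (pmap X u x) = snd h (pmap X u' x)))"

definition pro_mor :: "('i,'m,'a) pro_obj \<Rightarrow> ('j,'n,'b) pro_obj \<Rightarrow> ('j \<Rightarrow> 'i \<times> ('a \<Rightarrow> 'b)) \<Rightarrow> bool" where
  "pro_mor X Y \<rho> \<longleftrightarrow>
     (\<forall>j\<in>Obj (pidx Y). fst (\<rho> j) \<in> Obj (pidx X) \<and> snd (\<rho> j) \<in> hom (pgrp X (fst (\<rho> j))) (pgrp Y j)) \<and>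
     (\<forall>v\<in>Arr (pidx Y). germ_eq X (fst (\<rho> (Cod (pidx Y) v)), pmap Y v \<circ> snd (\<rho> (Cod (pidx Y) v)))
                                  (\<rho> (Dom (pidx Y) v)))"

definition pro_eq :: "('i,'m,'a) pro_obj \<Rightarrow> ('j,'n,'b) pro_obj \<Rightarrow> ('j \<Rightarrow> 'i \<times> ('a \<Rightarrow> 'b)) \<Rightarrow> ('j \<Rightarrow> 'i \<times> ('a \<Rightarrow> 'b)) \<Rightarrow> bool" where
  "pro_eq X Y \<rho> \<sigma> \<longleftrightarrow> (\<forall>j\<in>Obj (pidx Y). germ_eq X (\<rho> j) (\<sigma> j))"

text \<open>Composition: pro_comp \<sigma> \<rho> = \<sigma> o \<rho> for \<rho> : X \<rightarrow> Y, \<sigma> : Y \<rightarrow> Z.\<close>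
definition pro_comp :: "('k \<Rightarrow> 'j \<times> ('b \<Rightarrow> 'c)) \<Rightarrow> ('j \<Rightarrow> 'i \<times> ('a \<Rightarrow> 'b)) \<Rightarrow> ('k \<Rightarrow> 'i \<times> ('a \<Rightarrow> 'c))" where
  "pro_comp \<sigma> \<rho> = (\<lambda>k. (fst (\<rho> (fst (\<sigma> k))), snd (\<sigma> k) \<circ> snd (\<rho> (fst (\<sigma> k)))))"

definition pro_id :: "'i \<Rightarrow> 'i \<times> ('a \<Rightarrow> 'a)" where
  "pro_id = (\<lambda>i. (i, id))"

definition pro_pow :: "('i \<Rightarrow> 'i \<times> ('a \<Rightarrow> 'a)) \<Rightarrow> nat \<Rightarrow> ('i \<Rightarrow> 'i \<times> ('a \<Rightarrow> 'a))" where
  "pro_pow \<phi> n = (pro_comp \<phi> ^^ n) pro_id"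

definition pro_iso :: "('i,'m,'a) pro_obj \<Rightarrow> ('j,'n,'b) pro_obj \<Rightarrow> ('j \<Rightarrow> 'i \<times> ('a \<Rightarrow> 'b)) \<Rightarrow> bool" where
  "pro_iso X Y \<theta> \<longleftrightarrow> pro_mor X Y \<theta> \<and>
     (\<exists>\<psi>. pro_mor Y X \<psi> \<and> pro_eq X X (pro_comp \<psi> \<theta>) pro_id \<and> pro_eq Y Y (pro_comp \<theta> \<psi>) pro_id)"

end

theory Submission
  imports Defs "HOL-Algebra.Product_Groups"
begin

text \<open>Replace \<open>G\<close> by the inverse system indexed by the finite subdiagrams \<open>(F, M)\<close> of its
  index category. Write \<open>\<phi>\<^sub>k : G(\<phi> k) \<rightarrow> G(k)\<close> for the level maps of \<open>\<phi>\<close>. The group at \<open>(F, M)\<close>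
  consists of the families \<open>x(k, r) \<in> G(k)\<close>, \<open>k \<in> F\<close>, \<open>r < n\<close>, that are compatible with the
  transition maps in \<open>M\<close> and satisfy \<open>\<phi>\<^sub>k(x(\<phi> k, r)) = x(k, r + 1 mod n)\<close> whenever \<open>\<phi> k \<in> F\<close>.
  Cyclically shifting \<open>r\<close> is a level automorphism whose \<open>n\<close>-th power is the identity.
  \<open>G\<close> maps to the new system by sending \<open>y\<close> to the family with entry \<open>\<phi>\<^sup>r y\<close>, read at level
  \<open>k\<close>, at \<open>(k, r)\<close>: by filteredness the finitely many
  identities required at \<open>(F, M)\<close> hold after passing to a further level, the wrap-around one at
  \<open>r = n - 1\<close> because \<open>\<phi>\<^sup>n = id\<close>. Projection to an entry \<open>x(i, 0)\<close> is inverse to this map, since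
  over a large enough subdiagram a compatible family is determined by a single entry.\<close>

lemma category_hom_objs:
  assumes "category C" "u \<in> cat_hom C i j"
  shows "i \<in> Obj C" "j \<in> Obj C" "u \<in> Arr C"
  using assms unfolding category_def cat_hom_def by auto

lemma category_comp_in_hom:
  assumes "category C" "u \<in> cat_hom C i j" "v \<in> cat_hom C j k"
  shows "Comp C v u \<in> cat_hom C i k"
  using assms unfolding category_def cat_hom_def by auto

lemma category_ident_in_hom:
  assumes "category C" "i \<in> Obj C"
  shows "Ident C i \<in> cat_hom C i i"
  using assms unfolding category_def by auto

lemma category_comp_assoc:
  assumes "category C" "u \<in> cat_hom C i j" "v \<in> cat_hom C j k" "w \<in> cat_hom C k l"
  shows "Comp C w (Comp C v u) = Comp C (Comp C w v) u"
  using assms unfolding category_def cat_hom_def by auto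

lemma pro_group_category: "pro_group X \<Longrightarrow> category (pidx X)"
  by (simp add: pro_group_def filtered_def)

lemma pro_group_group: "pro_group X \<Longrightarrow> i \<in> Obj (pidx X) \<Longrightarrow> group (pgrp X i)"
  by (simp add: pro_group_def)

lemma pro_group_pmap_hom:
  assumes "pro_group X" "u \<in> cat_hom (pidx X) i j"
  shows "pmap X u \<in> hom (pgrp X j) (pgrp X i)"
  using assms unfolding pro_group_def cat_hom_def by auto

lemma pro_group_pmap_closed:
  assumes "pro_group X" "u \<in> cat_hom (pidx X) i j" "x \<in> carrier (pgrp X j)"
  shows "pmap X u x \<in> carrier (pgrp X i)"
  using pro_group_pmap_hom[OF assms(1,2)] assms(3) by (rule hom_in_carrier)

lemma pro_group_pmap_comp:
  assumes "pro_group X" "u \<in> cat_hom (pidx X) i j" "v \<in> cat_hom (pidx X) j k"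
    "x \<in> carrier (pgrp X k)"
  shows "pmap X (Comp (pidx X) v u) x = pmap X u (pmap X v x)"
  using assms unfolding pro_group_def cat_hom_def by auto

lemma pro_group_pmap_ident:
  assumes "pro_group X" "i \<in> Obj (pidx X)" "x \<in> carrier (pgrp X i)"
  shows "pmap X (Ident (pidx X) i) x = x"
  using assms unfolding pro_group_def by auto

lemma pro_group_upper_bound:
  assumes "pro_group X" "i \<in> Obj (pidx X)" "j \<in> Obj (pidx X)"
  obtains k u v where "u \<in> cat_hom (pidx X) i k" "v \<in> cat_hom (pidx X) j k"
  using assms unfolding pro_group_def filtered_def by blast

lemma pro_group_coequalize:
  assumes "pro_group X" "u \<in> cat_hom (pidx X) i j" "v \<in> cat_hom (pidx X) i j"
  obtains k w where "w \<in> cat_hom (pidx X) j k" "Comp (pidx X) w u = Comp (pidx X) w v"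
  using assms unfolding pro_group_def filtered_def by blast

lemma pro_group_finite_cocone:
  assumes X: "pro_group X" and S: "finite S" "S \<subseteq> Obj (pidx X)"
  obtains c \<alpha> where "c \<in> Obj (pidx X)" "\<And>s. s \<in> S \<Longrightarrow> \<alpha> s \<in> cat_hom (pidx X) s c"
proof -
  have "\<exists>c\<in>Obj (pidx X). \<forall>s\<in>S. cat_hom (pidx X) s c \<noteq> {}"
    using S
  proof (induction S rule: finite_induct)
    case empty
    have "Obj (pidx X) \<noteq> {}" using X by (simp add: pro_group_def filtered_def)
    then show ?case by blast
  next
    case (insert s S)
    then obtain c where c: "c \<in> Obj (pidx X)" "\<forall>t\<in>S. cat_hom (pidx X) t c \<noteq> {}"
      by auto
    obtain k u v where uv: "u \<in> cat_hom (pidx X) s k" "v \<in> cat_hom (pidx X) c k"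
      using insert.prems by (auto elim: pro_group_upper_bound[OF X _ c(1)])
    have "cat_hom (pidx X) t k \<noteq> {}" if t: "t \<in> S" for t
    proof -
      obtain w where "w \<in> cat_hom (pidx X) t c" using c(2) t by auto
      then have "Comp (pidx X) v w \<in> cat_hom (pidx X) t k"
        using category_comp_in_hom[OF pro_group_category[OF X] _ uv(2)] by auto
      then show ?thesis by auto
    qed
    moreover have "k \<in> Obj (pidx X)"
      using category_hom_objs(2)[OF pro_group_category[OF X] uv(1)] .
    ultimately show ?case using uv(1) by auto
  qed
  then obtain c where c: "c \<in> Obj (pidx X)" "\<forall>s\<in>S. \<exists>u. u \<in> cat_hom (pidx X) s c"
    by (auto simp: ex_in_conv)
  show thesis
    using c by (intro that[of c "\<lambda>s. SOME u. u \<in> cat_hom (pidx X) s c"]) (auto intro: someI_ex)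
qed

lemma germ_eqI:
  assumes "u \<in> cat_hom (pidx X) a k" "u' \<in> cat_hom (pidx X) b k"
    "\<And>x. x \<in> carrier (pgrp X k) \<Longrightarrow> f (pmap X u x) = g (pmap X u' x)"
  shows "germ_eq X (a, f) (b, g)"
  using assms unfolding germ_eq_def by auto

lemma germ_eqE:
  assumes "germ_eq X (a, f) (b, g)"
  obtains u k u' where "u \<in> cat_hom (pidx X) a k" "u' \<in> cat_hom (pidx X) b k"
    "\<And>x. x \<in> carrier (pgrp X k) \<Longrightarrow> f (pmap X u x) = g (pmap X u' x)"
  using assms unfolding germ_eq_def by auto

lemma germ_eq_sym: "germ_eq X (a, f) (b, g) \<Longrightarrow> germ_eq X (b, g) (a, f)"
  unfolding germ_eq_def by fastforce

lemma germ_eq_postcomp: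
  "germ_eq X (a, f) (b, g) \<Longrightarrow> germ_eq X (a, \<lambda>x. h (f x)) (b, \<lambda>x. h (g x))"
  unfolding germ_eq_def by fastforce

lemma germ_eq_cong:
  assumes X: "pro_group X" and a: "a \<in> Obj (pidx X)"
    and fg: "\<And>x. x \<in> carrier (pgrp X a) \<Longrightarrow> f x = g x"
  shows "germ_eq X (a, f) (a, g)"
proof -
  have i: "Ident (pidx X) a \<in> cat_hom (pidx X) a a"
    using category_ident_in_hom[OF pro_group_category[OF X] a] .
  show ?thesis
    by (rule germ_eqI[OF i i]) (simp add: pro_group_pmap_ident[OF X a] fg)
qed

lemma germ_eq_refl: "pro_group X \<Longrightarrow> a \<in> Obj (pidx X) \<Longrightarrow> germ_eq X (a, f) (a, f)"
  by (rule germ_eq_cong) auto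

lemma germ_eq_transition:
  assumes X: "pro_group X" and u: "u \<in> cat_hom (pidx X) a k"
  shows "germ_eq X (k, \<lambda>x. f (pmap X u x)) (a, f)"
proof -
  have k: "k \<in> Obj (pidx X)" using category_hom_objs[OF pro_group_category[OF X] u] by auto
  show ?thesis
    by (rule germ_eqI[OF category_ident_in_hom[OF pro_group_category[OF X] k] u])
      (simp add: pro_group_pmap_ident[OF X k])
qed

lemma germ_eq_trans:
  assumes X: "pro_group X" and fg: "germ_eq X (a, f) (b, g)" and gh: "germ_eq X (b, g) (c, h)"
  shows "germ_eq X (a, f) (c, h)"
proof -
  note C = pro_group_category[OF X]
  let ?comp = "Comp (pidx X)"
  obtain k1 u1 u1' where k1: "u1 \<in> cat_hom (pidx X) a k1" "u1' \<in> cat_hom (pidx X) b k1"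
    "\<And>x. x \<in> carrier (pgrp X k1) \<Longrightarrow> f (pmap X u1 x) = g (pmap X u1' x)"
    using fg by (elim germ_eqE) blast
  obtain k2 u2 u2' where k2: "u2 \<in> cat_hom (pidx X) b k2" "u2' \<in> cat_hom (pidx X) c k2"
    "\<And>x. x \<in> carrier (pgrp X k2) \<Longrightarrow> g (pmap X u2 x) = h (pmap X u2' x)"
    using gh by (elim germ_eqE) blast
  obtain k3 p q where pq: "p \<in> cat_hom (pidx X) k1 k3" "q \<in> cat_hom (pidx X) k2 k3"
    using pro_group_upper_bound[OF X] category_hom_objs[OF C k1(1)] category_hom_objs[OF C k2(1)]
    by metis
  \<comment> \<open>the two routes from \<open>b\<close> to \<open>k3\<close> need not agree, so first coequalize them\<close>
  obtain k e where e: "e \<in> cat_hom (pidx X) k3 k"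
    "?comp e (?comp p u1') = ?comp e (?comp q u2)"
    using pro_group_coequalize[OF X category_comp_in_hom[OF C k1(2) pq(1)]
        category_comp_in_hom[OF C k2(1) pq(2)]] .
  have ep: "?comp e p \<in> cat_hom (pidx X) k1 k" and eq: "?comp e q \<in> cat_hom (pidx X) k2 k"
    using category_comp_in_hom[OF C _ e(1)] pq by auto
  have route: "?comp (?comp e p) u1' = ?comp (?comp e q) u2"
    using e(2) category_comp_assoc[OF C k1(2) pq(1) e(1)] category_comp_assoc[OF C k2(1) pq(2) e(1)]
    by simp
  show ?thesis
  proof (rule germ_eqI[OF category_comp_in_hom[OF C k1(1) ep] category_comp_in_hom[OF C k2(2) eq]])
    fix x assume x: "x \<in> carrier (pgrp X k)"
    have "f (pmap X (?comp (?comp e p) u1) x) = g (pmap X (?comp (?comp e p) u1') x)"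
      using k1(3)[OF pro_group_pmap_closed[OF X ep x]]
      by (simp add: pro_group_pmap_comp[OF X k1(1) ep x] pro_group_pmap_comp[OF X k1(2) ep x])
    also have "\<dots> = h (pmap X (?comp (?comp e q) u2') x)"
      using k2(3)[OF pro_group_pmap_closed[OF X eq x]]
      by (simp add: route pro_group_pmap_comp[OF X k2(1) eq x] pro_group_pmap_comp[OF X k2(2) eq x])
    finally show "f (pmap X (?comp (?comp e p) u1) x) = h (pmap X (?comp (?comp e q) u2') x)" .
  qed
qed

lemma germ_eq_transitions:
  assumes X: "pro_group X" and fg: "germ_eq X (a, f) (b, g)"
    and p: "p \<in> cat_hom (pidx X) a d" and q: "q \<in> cat_hom (pidx X) b d"
  shows "germ_eq X (d, \<lambda>x. f (pmap X p x)) (d, \<lambda>x. g (pmap X q x))"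
  using germ_eq_transition[OF X p] fg germ_eq_sym[OF germ_eq_transition[OF X q]]
  by (blast intro: germ_eq_trans[OF X])

lemma germ_eq_same_level:
  assumes X: "pro_group X" and fg: "germ_eq X (k, f) (k, g)"
  obtains w k' where "w \<in> cat_hom (pidx X) k k'"
    "\<And>x. x \<in> carrier (pgrp X k') \<Longrightarrow> f (pmap X w x) = g (pmap X w x)"
proof -
  note C = pro_group_category[OF X]
  obtain k0 p q where pq: "p \<in> cat_hom (pidx X) k k0" "q \<in> cat_hom (pidx X) k k0"
    "\<And>x. x \<in> carrier (pgrp X k0) \<Longrightarrow> f (pmap X p x) = g (pmap X q x)"
    using fg by (elim germ_eqE) blast
  obtain k1 e where e: "e \<in> cat_hom (pidx X) k0 k1" "Comp (pidx X) e p = Comp (pidx X) e q"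
    using pro_group_coequalize[OF X pq(1,2)] .
  show thesis
  proof (rule that[OF category_comp_in_hom[OF C pq(1) e(1)]])
    fix x assume x: "x \<in> carrier (pgrp X k1)"
    have "f (pmap X (Comp (pidx X) e p) x) = g (pmap X (Comp (pidx X) e q) x)"
      using pq(3)[OF pro_group_pmap_closed[OF X e(1) x]]
      by (simp add: pro_group_pmap_comp[OF X pq(1) e(1) x] pro_group_pmap_comp[OF X pq(2) e(1) x])
    then show "f (pmap X (Comp (pidx X) e p) x) = g (pmap X (Comp (pidx X) e p) x)"
      by (simp add: e(2))
  qed
qed

lemma germ_eq_same_level_finite:
  assumes X: "pro_group X" and S: "finite S" and k: "k \<in> Obj (pidx X)"
    and fg: "\<And>f g. (f, g) \<in> S \<Longrightarrow> germ_eq X (k, f) (k, g)"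
  shows "\<exists>k' w. w \<in> cat_hom (pidx X) k k' \<and>
           (\<forall>(f, g)\<in>S. \<forall>x\<in>carrier (pgrp X k'). f (pmap X w x) = g (pmap X w x))"
  using S fg
proof (induction S rule: finite_induct)
  case empty
  then show ?case using category_ident_in_hom[OF pro_group_category[OF X] k] by blast
next
  case (insert fg S)
  note C = pro_group_category[OF X]
  obtain f g where fg: "fg = (f, g)" by fastforce
  from insert obtain k1 w where w: "w \<in> cat_hom (pidx X) k k1"
    "\<forall>(f, g)\<in>S. \<forall>x\<in>carrier (pgrp X k1). f (pmap X w x) = g (pmap X w x)" by auto
  have "germ_eq X (k1, \<lambda>x. f (pmap X w x)) (k1, \<lambda>x. g (pmap X w x))"
    using germ_eq_transitions[OF X insert.prems[of f g] w(1) w(1)] fg by simp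
  then obtain k2 w' where w': "w' \<in> cat_hom (pidx X) k1 k2"
    "\<And>x. x \<in> carrier (pgrp X k2) \<Longrightarrow> f (pmap X w (pmap X w' x)) = g (pmap X w (pmap X w' x))"
    by (elim germ_eq_same_level[OF X]) blast
  have ww': "Comp (pidx X) w' w \<in> cat_hom (pidx X) k k2"
    using category_comp_in_hom[OF C w(1) w'(1)] .
  have "\<forall>(f', g')\<in>insert fg S. \<forall>x\<in>carrier (pgrp X k2).
          f' (pmap X (Comp (pidx X) w' w) x) = g' (pmap X (Comp (pidx X) w' w) x)"
    using w(2) w'(2) pro_group_pmap_closed[OF X w'(1)]
    by (auto simp: fg pro_group_pmap_comp[OF X w(1) w'(1)])
  then show ?case using ww' by blast
qed

lemma germ_eq_tuple:
  assumes X: "pro_group X" and S: "finite S"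
    and c1: "c1 \<in> Obj (pidx X)" and c2: "c2 \<in> Obj (pidx X)"
    and h: "\<And>s. s \<in> S \<Longrightarrow> germ_eq X (c1, h1 s) (c2, h2 s)"
  shows "germ_eq X (c1, \<lambda>x. T (\<lambda>s\<in>S. h1 s x)) (c2, \<lambda>x. T (\<lambda>s\<in>S. h2 s x))"
proof -
  note C = pro_group_category[OF X]
  obtain d p q where pq: "p \<in> cat_hom (pidx X) c1 d" "q \<in> cat_hom (pidx X) c2 d"
    using pro_group_upper_bound[OF X c1 c2] .
  have d: "d \<in> Obj (pidx X)" using category_hom_objs[OF C pq(1)] by auto
  let ?P = "(\<lambda>s. (\<lambda>x. h1 s (pmap X p x), \<lambda>x. h2 s (pmap X q x))) ` S"
  have "germ_eq X (d, f) (d, g)" if "(f, g) \<in> ?P" for f g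
    using that germ_eq_transitions[OF X h pq] by auto
  then obtain k w where w: "w \<in> cat_hom (pidx X) d k"
    "\<forall>(f, g)\<in>?P. \<forall>x\<in>carrier (pgrp X k). f (pmap X w x) = g (pmap X w x)"
    using germ_eq_same_level_finite[OF X finite_imageI[OF S] d] by blast
  show ?thesis
  proof (rule germ_eqI[OF category_comp_in_hom[OF C pq(1) w(1)] category_comp_in_hom[OF C pq(2) w(1)]])
    fix x assume x: "x \<in> carrier (pgrp X k)"
    have "(\<lambda>s\<in>S. h1 s (pmap X (Comp (pidx X) w p) x)) = (\<lambda>s\<in>S. h2 s (pmap X (Comp (pidx X) w q) x))"
      using w(2) x
      by (auto simp: pro_group_pmap_comp[OF X pq(1) w(1) x] pro_group_pmap_comp[OF X pq(2) w(1) x])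
    then show "T (\<lambda>s\<in>S. h1 s (pmap X (Comp (pidx X) w p) x)) = T (\<lambda>s\<in>S. h2 s (pmap X (Comp (pidx X) w q) x))"
      by simp
  qed
qed

lemma pro_morI:
  assumes "category (pidx Y)"
    and "\<And>j. j \<in> Obj (pidx Y) \<Longrightarrow>
           fst (\<rho> j) \<in> Obj (pidx X) \<and> snd (\<rho> j) \<in> hom (pgrp X (fst (\<rho> j))) (pgrp Y j)"
    and "\<And>v d e. v \<in> cat_hom (pidx Y) d e \<Longrightarrow>
           germ_eq X (fst (\<rho> e), \<lambda>x. pmap Y v (snd (\<rho> e) x)) (\<rho> d)"
  shows "pro_mor X Y \<rho>"
  using assms unfolding pro_mor_def cat_hom_def comp_def by auto

lemma pro_mor_obj: "pro_mor X Y \<rho> \<Longrightarrow> j \<in> Obj (pidx Y) \<Longrightarrow> fst (\<rho> j) \<in> Obj (pidx X)"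
  by (simp add: pro_mor_def)

lemma pro_mor_hom:
  "pro_mor X Y \<rho> \<Longrightarrow> j \<in> Obj (pidx Y) \<Longrightarrow> snd (\<rho> j) \<in> hom (pgrp X (fst (\<rho> j))) (pgrp Y j)"
  by (simp add: pro_mor_def)

lemma pro_mor_germ_eq:
  assumes "pro_mor X Y \<rho>" "v \<in> cat_hom (pidx Y) d e"
  shows "germ_eq X (fst (\<rho> e), \<lambda>x. pmap Y v (snd (\<rho> e) x)) (fst (\<rho> d), snd (\<rho> d))"
  using assms unfolding pro_mor_def cat_hom_def by (auto simp: comp_def)

lemma pro_mor_id: "pro_group X \<Longrightarrow> pro_mor X X pro_id"
  by (rule pro_morI)
    (auto simp: pro_id_def hom_def pro_group_category category_hom_objs germ_eq_transition[of X _ _ _ id, simplified])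

lemma pro_mor_comp:
  assumes X: "pro_group X" and Y: "pro_group Y" and Z: "category (pidx Z)"
    and \<rho>: "pro_mor X Y \<rho>" and \<sigma>: "pro_mor Y Z \<sigma>"
  shows "pro_mor X Z (pro_comp \<sigma> \<rho>)"
proof (rule pro_morI[OF Z])
  fix j assume j: "j \<in> Obj (pidx Z)"
  show "fst (pro_comp \<sigma> \<rho> j) \<in> Obj (pidx X) \<and>
        snd (pro_comp \<sigma> \<rho> j) \<in> hom (pgrp X (fst (pro_comp \<sigma> \<rho> j))) (pgrp Z j)"
    using hom_compose[OF pro_mor_hom[OF \<rho> pro_mor_obj[OF \<sigma> j]] pro_mor_hom[OF \<sigma> j]]
      pro_mor_obj[OF \<rho> pro_mor_obj[OF \<sigma> j]]
    by (simp add: pro_comp_def)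
next
  fix v d e assume v: "v \<in> cat_hom (pidx Z) d e"
  obtain d' f where d: "\<sigma> d = (d', f)" by fastforce
  obtain e' g where e: "\<sigma> e = (e', g)" by fastforce
  obtain u m u' where u: "u \<in> cat_hom (pidx Y) e' m" "u' \<in> cat_hom (pidx Y) d' m"
    "\<And>y. y \<in> carrier (pgrp Y m) \<Longrightarrow> pmap Z v (g (pmap Y u y)) = f (pmap Y u' y)"
    using pro_mor_germ_eq[OF \<sigma> v] d e by (auto elim: germ_eqE)
  have m: "m \<in> Obj (pidx Y)" using category_hom_objs[OF pro_group_category[OF Y] u(1)] by auto
  \<comment> \<open>move both sides to the level of \<open>\<rho> m\<close>, where the square of \<open>\<sigma>\<close> commutes\<close>
  have "germ_eq X (fst (\<rho> e'), \<lambda>x. pmap Z v (g (snd (\<rho> e') x)))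
                  (fst (\<rho> m), \<lambda>x. pmap Z v (g (pmap Y u (snd (\<rho> m) x))))"
    using germ_eq_postcomp[OF germ_eq_sym[OF pro_mor_germ_eq[OF \<rho> u(1)]]] .
  also have "germ_eq X \<dots> (fst (\<rho> m), \<lambda>x. f (pmap Y u' (snd (\<rho> m) x)))"
    using pro_mor_obj[OF \<rho> m] hom_in_carrier[OF pro_mor_hom[OF \<rho> m]]
    by (intro germ_eq_cong[OF X]) (simp_all add: u(3))
  also (germ_eq_trans[OF X]) have "germ_eq X \<dots> (fst (\<rho> d'), \<lambda>x. f (snd (\<rho> d') x))"
    using germ_eq_postcomp[OF pro_mor_germ_eq[OF \<rho> u(2)]] .
  finally (germ_eq_trans[OF X]) show "germ_eq X (fst (pro_comp \<sigma> \<rho> e), \<lambda>x. pmap Z v (snd (pro_comp \<sigma> \<rho> e) x))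
                  (pro_comp \<sigma> \<rho> d)"
    by (simp add: pro_comp_def d e comp_def)
qed

lemma pro_comp_assoc: "pro_comp \<alpha> (pro_comp \<beta> \<gamma>) = pro_comp (pro_comp \<alpha> \<beta>) \<gamma>"
  by (simp add: pro_comp_def comp_assoc)

lemma pro_comp_id_left [simp]: "pro_comp pro_id \<rho> = \<rho>"
  and pro_comp_id_right [simp]: "pro_comp \<rho> pro_id = \<rho>"
  by (simp_all add: pro_comp_def pro_id_def)

lemma pro_pow_0 [simp]: "pro_pow \<phi> 0 = pro_id"
  and pro_pow_Suc: "pro_pow \<phi> (Suc r) = pro_comp \<phi> (pro_pow \<phi> r)"
  by (simp_all add: pro_pow_def)

lemma pro_pow_Suc_right: "pro_pow \<phi> (Suc r) = pro_comp (pro_pow \<phi> r) \<phi>"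
  by (induction r) (simp_all add: pro_pow_Suc pro_comp_assoc)

lemma pro_mor_pow: "pro_group X \<Longrightarrow> pro_mor X X \<phi> \<Longrightarrow> pro_mor X X (pro_pow \<phi> r)"
  by (induction r) (simp_all add: pro_pow_Suc pro_mor_id pro_mor_comp pro_group_category)

lemma Obj_dircat [simp]: "Obj (dircat J leq) = J"
  by (simp add: dircat_def)

lemma cat_hom_dircat: "u \<in> cat_hom (dircat J leq) a b \<longleftrightarrow> u = (a, b) \<and> a \<in> J \<and> b \<in> J \<and> leq a b"
  by (auto simp: cat_hom_def dircat_def)

lemma filtered_dircat:
  assumes "directed_set J leq"
  shows "filtered (dircat J leq)"
proof -
  have refl: "\<And>a. a \<in> J \<Longrightarrow> leq a a"
    and ub: "\<And>a b. a \<in> J \<Longrightarrow> b \<in> J \<Longrightarrow> \<exists>c\<in>J. leq a c \<and> leq b c"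
    using assms unfolding directed_set_def by blast+
  have "category (dircat J leq)"
    using assms unfolding directed_set_def category_def cat_hom_def dircat_def by auto
  moreover have "\<exists>c\<in>Obj (dircat J leq). cat_hom (dircat J leq) a c \<noteq> {} \<and> cat_hom (dircat J leq) b c \<noteq> {}"
    if ab: "a \<in> Obj (dircat J leq)" "b \<in> Obj (dircat J leq)" for a b
  proof -
    obtain c where "c \<in> J" "leq a c" "leq b c" using ub[of a b] ab by auto
    then have "(a, c) \<in> cat_hom (dircat J leq) a c" "(b, c) \<in> cat_hom (dircat J leq) b c"
      using ab by (simp_all add: cat_hom_dircat)
    then show ?thesis using \<open>c \<in> J\<close> by auto
  qed
  moreover have "\<exists>c w. w \<in> cat_hom (dircat J leq) b c \<and> Comp (dircat J leq) w u = Comp (dircat J leq) w v"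
    if "u \<in> cat_hom (dircat J leq) a b" "v \<in> cat_hom (dircat J leq) a b" for a b u v
    using that refl[of b] by (auto simp: cat_hom_dircat)
  moreover have "Obj (dircat J leq) \<noteq> {}"
    using assms by (simp add: directed_set_def)
  ultimately show ?thesis unfolding filtered_def by blast
qed

lemma subgroup_equalizer:
  assumes G: "group G" and H: "\<And>s. s \<in> S \<Longrightarrow> group (H s)"
    and f: "\<And>s. s \<in> S \<Longrightarrow> f s \<in> hom G (H s)" and g: "\<And>s. s \<in> S \<Longrightarrow> g s \<in> hom G (H s)"
  shows "subgroup {x \<in> carrier G. \<forall>s\<in>S. f s x = g s x} G"
proof (rule group.subgroupI[OF G])
  have gh: "group_hom G (H s) (f s)" "group_hom G (H s) (g s)" if "s \<in> S" for s
    using G H f g that by (simp_all add: group_hom_def group_hom_axioms_def)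
  have "f s \<one>\<^bsub>G\<^esub> = g s \<one>\<^bsub>G\<^esub>" if "s \<in> S" for s
    using group_hom.hom_one[OF gh(1)[OF that]] group_hom.hom_one[OF gh(2)[OF that]] by simp
  then show "{x \<in> carrier G. \<forall>s\<in>S. f s x = g s x} \<noteq> {}"
    using group.is_monoid[OF G] by (auto intro!: exI[of _ "\<one>\<^bsub>G\<^esub>"])
  fix x y assume x: "x \<in> {x \<in> carrier G. \<forall>s\<in>S. f s x = g s x}"
    and y: "y \<in> {x \<in> carrier G. \<forall>s\<in>S. f s x = g s x}"
  have "f s (inv\<^bsub>G\<^esub> x) = g s (inv\<^bsub>G\<^esub> x)" if "s \<in> S" for s
    using group_hom.hom_inv[OF gh(1)[OF that]] group_hom.hom_inv[OF gh(2)[OF that]] x that by simp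
  then show "inv\<^bsub>G\<^esub> x \<in> {x \<in> carrier G. \<forall>s\<in>S. f s x = g s x}"
    using x group.inv_closed[OF G] by simp
  have "f s (x \<otimes>\<^bsub>G\<^esub> y) = g s (x \<otimes>\<^bsub>G\<^esub> y)" if "s \<in> S" for s
    using group_hom.hom_mult[OF gh(1)[OF that]] group_hom.hom_mult[OF gh(2)[OF that]] x y that by simp
  then show "x \<otimes>\<^bsub>G\<^esub> y \<in> {x \<in> carrier G. \<forall>s\<in>S. f s x = g s x}"
    using x y group.is_monoid[OF G] monoid.m_closed by fastforce
qed blast

lemma hom_carrier_update_target:
  "f \<in> hom G H \<Longrightarrow> f ` carrier G \<subseteq> K \<Longrightarrow> f \<in> hom G (H\<lparr>carrier := K\<rparr>)"
  by (auto simp: hom_def)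

lemma hom_carrier_update_source:
  "f \<in> hom G H \<Longrightarrow> K \<subseteq> carrier G \<Longrightarrow> f \<in> hom (G\<lparr>carrier := K\<rparr>) H"
  by (auto simp: hom_def)

lemma product_group_coordinate_hom: "i \<in> I \<Longrightarrow> (\<lambda>x. x i) \<in> hom (product_group I G) (G i)"
  by (auto simp: hom_def)

lemma hom_into_product_group:
  assumes "\<And>i. i \<in> I \<Longrightarrow> (\<lambda>x. f x i) \<in> hom H (G i)"
  shows "(\<lambda>x. \<lambda>i\<in>I. f x i) \<in> hom H (product_group I G)"
  using assms by (auto simp: hom_def Pi_iff)

lemma iso_if_funpow_id:
  assumes f: "f \<in> hom G G" and n: "n > 0" and fn: "\<And>x. x \<in> carrier G \<Longrightarrow> (f ^^ n) x = x"
  shows "f \<in> iso G G"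
proof -
  obtain m where m: "n = Suc m" using n gr0_implies_Suc by blast
  have closed: "(f ^^ k) x \<in> carrier G" if "x \<in> carrier G" for k x
    using that by (induction k) (simp_all add: hom_in_carrier[OF f])
  have "bij_betw f (carrier G) (carrier G)"
  proof (rule bij_betw_byWitness[where f' = "f ^^ m"])
    show "\<forall>x\<in>carrier G. (f ^^ m) (f x) = x" "\<forall>x\<in>carrier G. f ((f ^^ m) x) = x"
      using fn by (simp_all add: m funpow_swap1)
  qed (use closed hom_in_carrier[OF f] in auto)
  then show ?thesis using f by (simp add: iso_def)
qed

text \<open>The statement prescribes level groups whose elements are sets; groups of families are
  transported along \<open>x \<mapsto> {x}\<close> to meet it.\<close>

definition singleton_monoid :: "('a, 'b) monoid_scheme \<Rightarrow> 'a set monoid" where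
  "singleton_monoid M = \<lparr>carrier = (\<lambda>x. {x}) ` carrier M,
     mult = (\<lambda>P Q. {the_elem P \<otimes>\<^bsub>M\<^esub> the_elem Q}), one = {\<one>\<^bsub>M\<^esub>}\<rparr>"

lemma carrier_singleton_monoid: "P \<in> carrier (singleton_monoid M) \<longleftrightarrow> (\<exists>x\<in>carrier M. P = {x})"
  by (auto simp: singleton_monoid_def)

lemma singleton_monoid_mult: "{x} \<otimes>\<^bsub>singleton_monoid M\<^esub> {y} = {x \<otimes>\<^bsub>M\<^esub> y}"
  by (simp add: singleton_monoid_def)

lemma group_singleton_monoid:
  assumes M: "group M" shows "group (singleton_monoid M)"
proof (rule groupI)
  fix P Q R assume "P \<in> carrier (singleton_monoid M)" "Q \<in> carrier (singleton_monoid M)"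
    "R \<in> carrier (singleton_monoid M)"
  then obtain x y z where "x \<in> carrier M" "y \<in> carrier M" "z \<in> carrier M" "P = {x}" "Q = {y}" "R = {z}"
    by (auto simp: carrier_singleton_monoid)
  then show "P \<otimes>\<^bsub>singleton_monoid M\<^esub> Q \<in> carrier (singleton_monoid M)"
    and "P \<otimes>\<^bsub>singleton_monoid M\<^esub> Q \<otimes>\<^bsub>singleton_monoid M\<^esub> R =
         P \<otimes>\<^bsub>singleton_monoid M\<^esub> (Q \<otimes>\<^bsub>singleton_monoid M\<^esub> R)"
    by (simp_all add: carrier_singleton_monoid singleton_monoid_mult group.subgroup_self[OF M]
        subgroup.m_closed group.is_monoid[OF M] monoid.m_assoc)
next
  fix P assume "P \<in> carrier (singleton_monoid M)"
  then obtain x where x: "x \<in> carrier M" "P = {x}" by (auto simp: carrier_singleton_monoid)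
  then show "\<one>\<^bsub>singleton_monoid M\<^esub> \<otimes>\<^bsub>singleton_monoid M\<^esub> P = P"
    and "\<exists>Q\<in>carrier (singleton_monoid M). Q \<otimes>\<^bsub>singleton_monoid M\<^esub> P = \<one>\<^bsub>singleton_monoid M\<^esub>"
    using M group.l_inv[OF M x(1)] group.inv_closed[OF M x(1)] group.is_monoid[OF M]
    by (auto simp: singleton_monoid_def intro!: bexI[of _ "{inv\<^bsub>M\<^esub> x}"])
qed (use M in \<open>simp add: singleton_monoid_def group.is_monoid\<close>)

lemma hom_into_singleton_monoid: "f \<in> hom M N \<Longrightarrow> (\<lambda>x. {f x}) \<in> hom M (singleton_monoid N)"
  by (auto simp: hom_def singleton_monoid_def)

lemma hom_from_singleton_monoid: "f \<in> hom M N \<Longrightarrow> (\<lambda>P. f (the_elem P)) \<in> hom (singleton_monoid M) N"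
  by (auto simp: hom_def singleton_monoid_def)

lemma hom_singleton_monoid:
  "f \<in> hom M N \<Longrightarrow> (\<lambda>P. {f (the_elem P)}) \<in> hom (singleton_monoid M) (singleton_monoid N)"
  by (auto simp: hom_def singleton_monoid_def)

locale periodic_pro_endo =
  fixes G :: "('i, 'm, 'a) pro_obj" and \<phi> :: "'i \<Rightarrow> 'i \<times> ('a \<Rightarrow> 'a)" and n :: nat
  assumes pro_group: "pro_group G" and endo: "pro_mor G G \<phi>" and n_pos: "n \<ge> 1"
    and pow_n: "pro_eq G G (pro_pow \<phi> n) pro_id"
begin

abbreviation I :: "('i, 'm) cat" where "I \<equiv> pidx G"

lemma category: "category I"
  using pro_group_category[OF pro_group] .

lemma group: "k \<in> Obj I \<Longrightarrow> group (pgrp G k)"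
  using pro_group_group[OF pro_group] .

lemma endo_obj: "k \<in> Obj I \<Longrightarrow> fst (\<phi> k) \<in> Obj I"
  and endo_hom: "k \<in> Obj I \<Longrightarrow> snd (\<phi> k) \<in> hom (pgrp G (fst (\<phi> k))) (pgrp G k)"
  using pro_mor_obj[OF endo] pro_mor_hom[OF endo] by auto

definition pow_level :: "'i \<Rightarrow> nat \<Rightarrow> 'i" where "pow_level k r = fst (pro_pow \<phi> r k)"
definition pow_map :: "'i \<Rightarrow> nat \<Rightarrow> 'a \<Rightarrow> 'a" where "pow_map k r = snd (pro_pow \<phi> r k)"

lemma pow_level_0 [simp]: "pow_level k 0 = k" and pow_map_0 [simp]: "pow_map k 0 = id"
  by (simp_all add: pow_level_def pow_map_def pro_id_def)

lemma pow_level_Suc: "pow_level k (Suc r) = pow_level (fst (\<phi> k)) r"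
  and pow_map_Suc: "pow_map k (Suc r) = snd (\<phi> k) \<circ> pow_map (fst (\<phi> k)) r"
  by (simp_all add: pow_level_def pow_map_def pro_pow_Suc pro_comp_def)

lemma pow_level_Suc_right: "pow_level k (Suc r) = fst (\<phi> (pow_level k r))"
  and pow_map_Suc_right: "pow_map k (Suc r) = pow_map k r \<circ> snd (\<phi> (pow_level k r))"
  by (simp_all add: pow_level_def pow_map_def pro_pow_Suc_right pro_comp_def)

lemma pow_level_obj: "k \<in> Obj I \<Longrightarrow> pow_level k r \<in> Obj I"
  and pow_map_hom: "k \<in> Obj I \<Longrightarrow> pow_map k r \<in> hom (pgrp G (pow_level k r)) (pgrp G k)"
  using pro_mor_obj[OF pro_mor_pow[OF pro_group endo]] pro_mor_hom[OF pro_mor_pow[OF pro_group endo]]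
  by (simp_all add: pow_level_def pow_map_def)

lemma pow_germ_natural:
  "v \<in> cat_hom I d e \<Longrightarrow>
     germ_eq G (pow_level e r, \<lambda>x. pmap G v (pow_map e r x)) (pow_level d r, pow_map d r)"
  using pro_mor_germ_eq[OF pro_mor_pow[OF pro_group endo]] by (simp add: pow_level_def pow_map_def)

lemma pow_germ_wrap:
  assumes k: "k \<in> Obj I" and r: "r < n"
  shows "germ_eq G (pow_level k (Suc r), pow_map k (Suc r))
                   (pow_level k (Suc r mod n), pow_map k (Suc r mod n))"
proof (cases "Suc r = n")
  case True
  then show ?thesis
    using pow_n k by (simp add: pro_eq_def pow_level_def pow_map_def pro_id_def)
next
  case False
  then show ?thesis using r germ_eq_refl[OF pro_group pow_level_obj[OF k]] by simp
qed

subsection \<open>The index set: finite subdiagrams\<close>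

definition subdiagrams :: "('i set \<times> 'm set) set" where
  "subdiagrams = {(F, M). finite F \<and> finite M \<and> F \<subseteq> Obj I \<and> M \<subseteq> Arr I \<and>
                         (\<forall>v\<in>M. Dom I v \<in> F \<and> Cod I v \<in> F)}"

definition subdiagram_le :: "'i set \<times> 'm set \<Rightarrow> 'i set \<times> 'm set \<Rightarrow> bool" where
  "subdiagram_le a b \<longleftrightarrow> fst a \<subseteq> fst b \<and> snd a \<subseteq> snd b"

lemma subdiagramsD:
  assumes "j \<in> subdiagrams"
  shows "finite (fst j)" "fst j \<subseteq> Obj I"
    and "\<And>v. v \<in> snd j \<Longrightarrow> v \<in> cat_hom I (Dom I v) (Cod I v) \<and> Dom I v \<in> fst j \<and> Cod I v \<in> fst j"
  using assms by (auto simp: subdiagrams_def cat_hom_def)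

lemma directed_subdiagrams: "directed_set subdiagrams subdiagram_le"
  unfolding directed_set_def
proof (intro conjI ballI)
  show "subdiagrams \<noteq> {}" by (auto simp: subdiagrams_def)
  fix a b assume "a \<in> subdiagrams" "b \<in> subdiagrams"
  then show "\<exists>c\<in>subdiagrams. subdiagram_le a c \<and> subdiagram_le b c"
    by (intro bexI[of _ "(fst a \<union> fst b, snd a \<union> snd b)"]) (auto simp: subdiagrams_def subdiagram_le_def)
qed (auto simp: subdiagram_le_def)

text \<open>The entry \<open>x k r\<close> of a family stands for the image under \<open>\<phi>\<^sup>r\<close> at level \<open>k\<close>.\<close>

definition families :: "'i set \<Rightarrow> ('i \<Rightarrow> nat \<Rightarrow> 'a) monoid" where
  "families F = product_group F (\<lambda>k. product_group {..<n} (\<lambda>_. pgrp G k))"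

lemma group_families: "F \<subseteq> Obj I \<Longrightarrow> group (families F)"
  unfolding families_def by (intro product_group group) auto

lemma families_coordinate_hom:
  assumes "k \<in> F" "r < n"
  shows "(\<lambda>x. x k r) \<in> hom (families F) (pgrp G k)"
proof -
  have "(\<lambda>y. y r) \<circ> (\<lambda>x. x k) \<in> hom (families F) (pgrp G k)"
    unfolding families_def
    using hom_compose[OF product_group_coordinate_hom[of k F "\<lambda>k. product_group {..<n} (\<lambda>_. pgrp G k)"]
        product_group_coordinate_hom[of r "{..<n}" "\<lambda>_. pgrp G k"]] assms
    by simp
  then show ?thesis by (simp add: comp_def)
qed

lemma hom_into_families:
  assumes "\<And>k r. k \<in> F \<Longrightarrow> r < n \<Longrightarrow> (\<lambda>x. f x k r) \<in> hom H (pgrp G k)"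
  shows "(\<lambda>x. \<lambda>k\<in>F. \<lambda>r\<in>{..<n}. f x k r) \<in> hom H (families F)"
  unfolding families_def using assms by (auto intro!: hom_into_product_group)

lemma families_extensional:
  "x \<in> carrier (families F) \<Longrightarrow> (\<lambda>k\<in>F. \<lambda>r\<in>{..<n}. x k r) = x"
  by (auto simp: families_def PiE_iff extensional_def fun_eq_iff)

definition compatible_families :: "'i set \<times> 'm set \<Rightarrow> ('i \<Rightarrow> nat \<Rightarrow> 'a) set" where
  "compatible_families j = {x \<in> carrier (families (fst j)).
      (\<forall>v\<in>snd j. \<forall>r<n. pmap G v (x (Cod I v) r) = x (Dom I v) r) \<and>
      (\<forall>k\<in>fst j. fst (\<phi> k) \<in> fst j \<longrightarrow> (\<forall>r<n. snd (\<phi> k) (x (fst (\<phi> k)) r) = x k (Suc r mod n)))}"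

lemma subgroup_compatible_families:
  assumes j: "j \<in> subdiagrams"
  shows "subgroup (compatible_families j) (families (fst j))"
proof -
  note F = group_families[OF subdiagramsD(2)[OF j]]
  let ?arrows = "snd j \<times> {..<n}"
  let ?shifts = "{(k, r). k \<in> fst j \<and> fst (\<phi> k) \<in> fst j \<and> r < n}"
  let ?A = "{x \<in> carrier (families (fst j)). \<forall>(v, r)\<in>?arrows. pmap G v (x (Cod I v) r) = x (Dom I v) r}"
  let ?B = "{x \<in> carrier (families (fst j)).
              \<forall>(k, r)\<in>?shifts. snd (\<phi> k) (x (fst (\<phi> k)) r) = x k (Suc r mod n)}"
  have "subgroup ?A (families (fst j))"
    using subgroup_equalizer[OF F, of ?arrows "\<lambda>(v, r). pgrp G (Dom I v)"
        "\<lambda>(v, r) x. pmap G v (x (Cod I v) r)" "\<lambda>(v, r) x. x (Dom I v) r"]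
      subdiagramsD(2,3)[OF j] group families_coordinate_hom
      hom_compose[OF families_coordinate_hom pro_group_pmap_hom[OF pro_group], unfolded comp_def]
    by (force simp: case_prod_unfold)
  moreover have "subgroup ?B (families (fst j))"
    using subgroup_equalizer[OF F, of ?shifts "\<lambda>(k, r). pgrp G k"
        "\<lambda>(k, r) x. snd (\<phi> k) (x (fst (\<phi> k)) r)" "\<lambda>(k, r) x. x k (Suc r mod n)"]
      subdiagramsD(2)[OF j] group families_coordinate_hom n_pos
      hom_compose[OF families_coordinate_hom endo_hom, unfolded comp_def]
    by (force simp: case_prod_unfold)
  ultimately have "subgroup (?A \<inter> ?B) (families (fst j))"
    by (rule subgroup_Int)
  moreover have "compatible_families j = ?A \<inter> ?B"
    by (auto simp: compatible_families_def)
  ultimately show ?thesis by simp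
qed

definition level_group :: "'i set \<times> 'm set \<Rightarrow> ('i \<Rightarrow> nat \<Rightarrow> 'a) set monoid" where
  "level_group j = singleton_monoid ((families (fst j))\<lparr>carrier := compatible_families j\<rparr>)"

lemma group_level_group: "j \<in> subdiagrams \<Longrightarrow> group (level_group j)"
  unfolding level_group_def
  by (intro group_singleton_monoid group.subgroup_imp_group group_families subdiagramsD
      subgroup_compatible_families)

lemma carrier_level_group: "P \<in> carrier (level_group j) \<longleftrightarrow> (\<exists>x\<in>compatible_families j. P = {x})"
  by (simp add: level_group_def carrier_singleton_monoid)

lemma compatible_families_subset: "compatible_families j \<subseteq> carrier (families (fst j))"
  by (auto simp: compatible_families_def)

lemma hom_level_group:
  assumes "f \<in> hom (families (fst a)) (families (fst b))"
    and "f ` compatible_families a \<subseteq> compatible_families b"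
  shows "(\<lambda>P. {f (the_elem P)}) \<in> hom (level_group a) (level_group b)"
  unfolding level_group_def using assms compatible_families_subset
  by (intro hom_singleton_monoid hom_carrier_update_target hom_carrier_update_source) auto

lemma hom_into_level_group:
  assumes "f \<in> hom H (families (fst j))" and "f ` carrier H \<subseteq> compatible_families j"
  shows "(\<lambda>x. {f x}) \<in> hom H (level_group j)"
  unfolding level_group_def using assms
  by (intro hom_into_singleton_monoid hom_carrier_update_target) auto

lemma hom_from_level_group:
  "f \<in> hom (families (fst j)) H \<Longrightarrow> (\<lambda>P. f (the_elem P)) \<in> hom (level_group j) H"
  unfolding level_group_def
  by (intro hom_from_singleton_monoid hom_carrier_update_source compatible_families_subset)

definition restrict_family :: "'i set \<Rightarrow> ('i \<Rightarrow> nat \<Rightarrow> 'a) \<Rightarrow> 'i \<Rightarrow> nat \<Rightarrow> 'a" where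
  "restrict_family F x = (\<lambda>k\<in>F. \<lambda>r\<in>{..<n}. x k r)"

definition approx ::
  "('i set \<times> 'm set, ('i set \<times> 'm set) \<times> ('i set \<times> 'm set), ('i \<Rightarrow> nat \<Rightarrow> 'a) set) pro_obj" where
  "approx = \<lparr>pidx = dircat subdiagrams subdiagram_le, pgrp = level_group,
             pmap = (\<lambda>u P. {restrict_family (fst (fst u)) (the_elem P)})\<rparr>"

lemma approx_simps [simp]:
  "pidx approx = dircat subdiagrams subdiagram_le" "pgrp approx = level_group"
  "pmap approx = (\<lambda>u P. {restrict_family (fst (fst u)) (the_elem P)})"
  by (simp_all add: approx_def)

lemma restrict_family_hom: "F \<subseteq> F' \<Longrightarrow> restrict_family F \<in> hom (families F') (families F)"
  unfolding restrict_family_def by (rule hom_into_families) (auto intro: families_coordinate_hom)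

lemma restrict_family_compatible:
  "a \<in> subdiagrams \<Longrightarrow> subdiagram_le a b \<Longrightarrow> x \<in> compatible_families b \<Longrightarrow>
     restrict_family (fst a) x \<in> compatible_families a"
  using restrict_family_hom[of "fst a" "fst b"] hom_in_carrier[OF restrict_family_hom, of "fst a" "fst b" x]
  by (auto simp: compatible_families_def subdiagram_le_def restrict_family_def subdiagrams_def)

lemma restrict_family_id: "x \<in> carrier (families F) \<Longrightarrow> restrict_family F x = x"
  by (simp add: restrict_family_def families_extensional)

lemma restrict_family_restrict_family:
  "F \<subseteq> F' \<Longrightarrow> restrict_family F (restrict_family F' x) = restrict_family F x"
  by (auto simp: restrict_family_def fun_eq_iff)

lemma pro_group_approx: "pro_group approx"
  unfolding pro_group_def
proof (intro conjI ballI impI)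
  show "filtered (pidx approx)"
    using filtered_dircat[OF directed_subdiagrams] by simp
  show "group (pgrp approx j)" if "j \<in> Obj (pidx approx)" for j
    using that by (simp add: group_level_group)
  show "pmap approx u \<in> hom (pgrp approx (Cod (pidx approx) u)) (pgrp approx (Dom (pidx approx) u))"
    if "u \<in> Arr (pidx approx)" for u
    using that restrict_family_compatible
    by (auto simp: dircat_def subdiagram_le_def intro!: hom_level_group restrict_family_hom)
  show "pmap approx (Ident (pidx approx) j) P = P" if P: "P \<in> carrier (pgrp approx j)" for j P
  proof -
    obtain x where "x \<in> compatible_families j" "P = {x}"
      using P by (auto simp: carrier_level_group)
    then show ?thesis
      using restrict_family_id[OF subsetD[OF compatible_families_subset]] by (simp add: dircat_def)
  qed
  show "pmap approx (Comp (pidx approx) v u) P = pmap approx u (pmap approx v P)"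
    if "u \<in> Arr (pidx approx)" "v \<in> Arr (pidx approx)" "Cod (pidx approx) u = Dom (pidx approx) v"
    for u v P
    using that by (auto simp: dircat_def subdiagram_le_def restrict_family_restrict_family)
qed

definition rotate_family :: "'i set \<Rightarrow> ('i \<Rightarrow> nat \<Rightarrow> 'a) \<Rightarrow> 'i \<Rightarrow> nat \<Rightarrow> 'a" where
  "rotate_family F x = (\<lambda>k\<in>F. \<lambda>r\<in>{..<n}. x k (Suc r mod n))"

definition rotate :: "'i set \<times> 'm set \<Rightarrow> ('i \<Rightarrow> nat \<Rightarrow> 'a) set \<Rightarrow> ('i \<Rightarrow> nat \<Rightarrow> 'a) set" where
  "rotate j P = {rotate_family (fst j) (the_elem P)}"

lemma rotate_family_hom: "rotate_family F \<in> hom (families F) (families F)"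
  unfolding rotate_family_def using n_pos by (intro hom_into_families families_coordinate_hom) auto

lemma rotate_family_compatible:
  assumes j: "j \<in> subdiagrams" and x: "x \<in> compatible_families j"
  shows "rotate_family (fst j) x \<in> compatible_families j"
proof -
  have "rotate_family (fst j) x \<in> carrier (families (fst j))"
    using hom_in_carrier[OF rotate_family_hom subsetD[OF compatible_families_subset x]] .
  moreover have "Suc r mod n < n" for r using n_pos by simp
  ultimately show ?thesis
    using x subdiagramsD(3)[OF j] unfolding compatible_families_def rotate_family_def
    by simp
qed

lemma funpow_rotate_family:
  assumes "x \<in> carrier (families F)"
  shows "(rotate_family F ^^ m) x = (\<lambda>k\<in>F. \<lambda>r\<in>{..<n}. x k ((r + m) mod n))"
proof (induction m)
  case 0
  have "(\<lambda>k\<in>F. \<lambda>r\<in>{..<n}. x k ((r + 0) mod n)) = (\<lambda>k\<in>F. \<lambda>r\<in>{..<n}. x k r)"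
    by (intro restrict_ext) auto
  then show ?case by (simp only: funpow_0 families_extensional[OF assms])
next
  case (Suc m)
  then show ?case by (auto simp: rotate_family_def fun_eq_iff mod_add_left_eq)
qed

lemma funpow_rotate_n:
  assumes "P \<in> carrier (level_group j)"
  shows "(rotate j ^^ n) P = P"
proof -
  obtain x where "x \<in> compatible_families j" and P: "P = {x}"
    using assms by (auto simp: carrier_level_group)
  then have x: "x \<in> carrier (families (fst j))" using compatible_families_subset by blast
  have "(rotate j ^^ m) {x} = {(rotate_family (fst j) ^^ m) x}" for m
    by (induction m) (simp_all add: rotate_def)
  moreover have "(\<lambda>k\<in>fst j. \<lambda>r\<in>{..<n}. x k ((r + n) mod n)) = (\<lambda>k\<in>fst j. \<lambda>r\<in>{..<n}. x k r)"
    by (intro restrict_ext) auto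
  ultimately show ?thesis
    using P funpow_rotate_family[OF x, of n] families_extensional[OF x] by simp
qed

lemma rotate_hom: "j \<in> subdiagrams \<Longrightarrow> rotate j \<in> hom (level_group j) (level_group j)"
  unfolding rotate_def by (intro hom_level_group rotate_family_hom) (auto intro: rotate_family_compatible)

lemma rotate_iso: "j \<in> subdiagrams \<Longrightarrow> rotate j \<in> iso (level_group j) (level_group j)"
  using n_pos by (intro iso_if_funpow_id[OF rotate_hom _ funpow_rotate_n]) auto

lemma rotate_restrict:
  assumes "subdiagram_le a b" "P \<in> carrier (level_group b)"
  shows "pmap approx (a, b) (rotate b P) = rotate a (pmap approx (a, b) P)"
  using assms n_pos
  by (auto simp: carrier_level_group rotate_def rotate_family_def restrict_family_def subdiagram_le_def
      intro!: restrict_ext)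

subsection \<open>The comparison map from \<open>G\<close>\<close>

definition cone_family :: "'i set \<Rightarrow> ('i \<Rightarrow> nat \<Rightarrow> 'm) \<Rightarrow> 'a \<Rightarrow> 'i \<Rightarrow> nat \<Rightarrow> 'a" where
  "cone_family F \<beta> y = (\<lambda>k\<in>F. \<lambda>r\<in>{..<n}. pow_map k r (pmap G (\<beta> k r) y))"

definition level_cone :: "'i set \<times> 'm set \<Rightarrow> 'i \<Rightarrow> ('i \<Rightarrow> nat \<Rightarrow> 'm) \<Rightarrow> bool" where
  "level_cone j c \<beta> \<longleftrightarrow> c \<in> Obj I \<and> (\<forall>k\<in>fst j. \<forall>r<n. \<beta> k r \<in> cat_hom I (pow_level k r) c) \<and>
     (\<forall>y\<in>carrier (pgrp G c). cone_family (fst j) \<beta> y \<in> compatible_families j)"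

lemma cone_family_hom:
  assumes "F \<subseteq> Obj I" and "\<And>k r. k \<in> F \<Longrightarrow> r < n \<Longrightarrow> \<beta> k r \<in> cat_hom I (pow_level k r) c"
  shows "cone_family F \<beta> \<in> hom (pgrp G c) (families F)"
  unfolding cone_family_def using assms
  by (intro hom_into_families hom_compose[OF pro_group_pmap_hom[OF pro_group] pow_map_hom,
        unfolded comp_def]) auto

text \<open>The identities a cone must satisfy, stated for arrows \<open>\<alpha> s\<close> from the levels \<open>s\<close> to a common
  level at which they need not hold yet.\<close>

definition cone_constraints :: "'i set \<times> 'm set \<Rightarrow> ('i \<Rightarrow> 'm) \<Rightarrow> (('a \<Rightarrow> 'a) \<times> ('a \<Rightarrow> 'a)) set" where
  "cone_constraints j \<alpha> =
     (\<lambda>(v, r). (\<lambda>y. pmap G v (pow_map (Cod I v) r (pmap G (\<alpha> (pow_level (Cod I v) r)) y)),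
               \<lambda>y. pow_map (Dom I v) r (pmap G (\<alpha> (pow_level (Dom I v) r)) y)))
       ` (snd j \<times> {..<n}) \<union>
     (\<lambda>(k, r). (\<lambda>y. snd (\<phi> k) (pow_map (fst (\<phi> k)) r (pmap G (\<alpha> (pow_level k (Suc r))) y)),
               \<lambda>y. pow_map k (Suc r mod n) (pmap G (\<alpha> (pow_level k (Suc r mod n))) y)))
       ` {(k, r). k \<in> fst j \<and> fst (\<phi> k) \<in> fst j \<and> r < n}"

lemma finite_cone_constraints:
  assumes "j \<in> subdiagrams" shows "finite (cone_constraints j \<alpha>)"
proof -
  have "{(k, r). k \<in> fst j \<and> fst (\<phi> k) \<in> fst j \<and> r < n} \<subseteq> fst j \<times> {..<n}" by auto
  then have "finite {(k, r). k \<in> fst j \<and> fst (\<phi> k) \<in> fst j \<and> r < n}"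
    using subdiagramsD(1)[OF assms] finite_subset by blast
  moreover have "finite (snd j \<times> {..<n})" using assms by (auto simp: subdiagrams_def)
  ultimately show ?thesis by (simp add: cone_constraints_def)
qed

lemma arrow_in_cone_constraints:
  "v \<in> snd j \<Longrightarrow> r < n \<Longrightarrow>
    (\<lambda>y. pmap G v (pow_map (Cod I v) r (pmap G (\<alpha> (pow_level (Cod I v) r)) y)),
     \<lambda>y. pow_map (Dom I v) r (pmap G (\<alpha> (pow_level (Dom I v) r)) y)) \<in> cone_constraints j \<alpha>"
  unfolding cone_constraints_def by (intro UnI1 image_eqI[of _ _ "(v, r)"]) auto

lemma rotation_in_cone_constraints:
  "k \<in> fst j \<Longrightarrow> fst (\<phi> k) \<in> fst j \<Longrightarrow> r < n \<Longrightarrow>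
    (\<lambda>y. snd (\<phi> k) (pow_map (fst (\<phi> k)) r (pmap G (\<alpha> (pow_level k (Suc r))) y)),
     \<lambda>y. pow_map k (Suc r mod n) (pmap G (\<alpha> (pow_level k (Suc r mod n))) y)) \<in> cone_constraints j \<alpha>"
  unfolding cone_constraints_def by (intro UnI2 image_eqI[of _ _ "(k, r)"]) auto

lemma germ_eq_cone_constraints:
  assumes j: "j \<in> subdiagrams"
    and \<alpha>: "\<And>k r. k \<in> fst j \<Longrightarrow> r < n \<Longrightarrow> \<alpha> (pow_level k r) \<in> cat_hom I (pow_level k r) c"
    and fg: "(f, g) \<in> cone_constraints j \<alpha>"
  shows "germ_eq G (c, f) (c, g)"
  using fg unfolding cone_constraints_def
proof (elim UnE imageE; clarsimp)
  fix v r assume v: "v \<in> snd j" and r: "r < n"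
  note vv = subdiagramsD(3)[OF j v]
  show "germ_eq G (c, \<lambda>y. pmap G v (pow_map (Cod I v) r (pmap G (\<alpha> (pow_level (Cod I v) r)) y)))
                  (c, \<lambda>y. pow_map (Dom I v) r (pmap G (\<alpha> (pow_level (Dom I v) r)) y))"
    using germ_eq_transitions[OF pro_group pow_germ_natural \<alpha> \<alpha>] vv r by blast
next
  fix k r assume k: "k \<in> fst j" and \<phi>k: "fst (\<phi> k) \<in> fst j" and r: "r < n"
  have p: "\<alpha> (pow_level k (Suc r)) \<in> cat_hom I (pow_level k (Suc r)) c"
    using \<alpha>[OF \<phi>k r] by (simp add: pow_level_Suc)
  have q: "\<alpha> (pow_level k (Suc r mod n)) \<in> cat_hom I (pow_level k (Suc r mod n)) c"
    using \<alpha>[OF k] n_pos by simp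
  have "germ_eq G (c, \<lambda>y. pow_map k (Suc r) (pmap G (\<alpha> (pow_level k (Suc r))) y))
                  (c, \<lambda>y. pow_map k (Suc r mod n) (pmap G (\<alpha> (pow_level k (Suc r mod n))) y))"
    using germ_eq_transitions[OF pro_group pow_germ_wrap[OF _ r] p q] subdiagramsD(2)[OF j] k by blast
  then show "germ_eq G (c, \<lambda>y. snd (\<phi> k) (pow_map (fst (\<phi> k)) r (pmap G (\<alpha> (pow_level k (Suc r))) y)))
                  (c, \<lambda>y. pow_map k (Suc r mod n) (pmap G (\<alpha> (pow_level k (Suc r mod n))) y))"
    by (simp add: pow_map_Suc)
qed

lemma level_cone_if_constraints:
  assumes j: "j \<in> subdiagrams" and w: "w \<in> cat_hom I c0 c"
    and \<alpha>: "\<And>k r. k \<in> fst j \<Longrightarrow> r < n \<Longrightarrow> \<alpha> (pow_level k r) \<in> cat_hom I (pow_level k r) c0"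
    and eq: "\<And>f g y. (f, g) \<in> cone_constraints j \<alpha> \<Longrightarrow> y \<in> carrier (pgrp G c) \<Longrightarrow>
               f (pmap G w y) = g (pmap G w y)"
  shows "level_cone j c (\<lambda>k r. Comp I w (\<alpha> (pow_level k r)))"
proof -
  define \<beta> where "\<beta> = (\<lambda>k r. Comp I w (\<alpha> (pow_level k r)))"
  have \<beta>: "\<beta> k r \<in> cat_hom I (pow_level k r) c" if "k \<in> fst j" "r < n" for k r
    unfolding \<beta>_def using category_comp_in_hom[OF category \<alpha>[OF that] w] .
  have pmap_\<beta>: "pmap G (\<beta> k r) y = pmap G (\<alpha> (pow_level k r)) (pmap G w y)"
    if "k \<in> fst j" "r < n" "y \<in> carrier (pgrp G c)" for k r y
    unfolding \<beta>_def using pro_group_pmap_comp[OF pro_group \<alpha>[OF that(1,2)] w that(3)] .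
  have "cone_family (fst j) \<beta> y \<in> compatible_families j" if y: "y \<in> carrier (pgrp G c)" for y
  proof -
    have "cone_family (fst j) \<beta> y \<in> carrier (families (fst j))"
      using hom_in_carrier[OF cone_family_hom[OF subdiagramsD(2)[OF j] \<beta>] y] .
    moreover have "pmap G v (cone_family (fst j) \<beta> y (Cod I v) r) = cone_family (fst j) \<beta> y (Dom I v) r"
      if "v \<in> snd j" "r < n" for v r
      using that subdiagramsD(3)[OF j that(1)] eq[OF arrow_in_cone_constraints[OF that] y] y
      by (simp add: cone_family_def pmap_\<beta>)
    moreover have "snd (\<phi> k) (cone_family (fst j) \<beta> y (fst (\<phi> k)) r) = cone_family (fst j) \<beta> y k (Suc r mod n)"
      if "k \<in> fst j" "fst (\<phi> k) \<in> fst j" "r < n" for k r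
      using that n_pos eq[OF rotation_in_cone_constraints[OF that] y] y
      by (simp add: cone_family_def pmap_\<beta> pow_level_Suc)
    ultimately show ?thesis by (simp add: compatible_families_def)
  qed
  then have "level_cone j c \<beta>"
    using \<beta> category_hom_objs(2)[OF category w] by (simp add: level_cone_def)
  then show ?thesis by (simp add: \<beta>_def)
qed

lemma level_cone_exists:
  assumes j: "j \<in> subdiagrams"
  shows "\<exists>c \<beta>. level_cone j c \<beta>"
proof -
  let ?levels = "(\<lambda>(k, r). pow_level k r) ` (fst j \<times> {..<n})"
  have "finite ?levels" "?levels \<subseteq> Obj I"
    using subdiagramsD(1,2)[OF j] pow_level_obj by auto
  then obtain c0 \<alpha> where c0: "c0 \<in> Obj I" and \<alpha>: "\<And>s. s \<in> ?levels \<Longrightarrow> \<alpha> s \<in> cat_hom I s c0"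
    using pro_group_finite_cocone[OF pro_group] by metis
  have \<alpha>': "\<alpha> (pow_level k r) \<in> cat_hom I (pow_level k r) c0" if "k \<in> fst j" "r < n" for k r
    using \<alpha> that by auto
  obtain c w where w: "w \<in> cat_hom I c0 c"
    "\<forall>(f, g)\<in>cone_constraints j \<alpha>. \<forall>y\<in>carrier (pgrp G c). f (pmap G w y) = g (pmap G w y)"
    using germ_eq_same_level_finite[OF pro_group finite_cone_constraints[OF j] c0
        germ_eq_cone_constraints[OF j \<alpha>']] by blast
  have "level_cone j c (\<lambda>k r. Comp I w (\<alpha> (pow_level k r)))"
    using w(2) by (intro level_cone_if_constraints[OF j w(1) \<alpha>']) auto
  then show ?thesis by blast
qed

definition comparison :: "'i set \<times> 'm set \<Rightarrow> 'i \<times> ('a \<Rightarrow> ('i \<Rightarrow> nat \<Rightarrow> 'a) set)" where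
  "comparison j = (let (c, \<beta>) = (SOME (c, \<beta>). level_cone j c \<beta>) in (c, \<lambda>y. {cone_family (fst j) \<beta> y}))"

lemma comparison_cone:
  assumes "j \<in> subdiagrams"
  obtains c \<beta> where "level_cone j c \<beta>" "comparison j = (c, \<lambda>y. {cone_family (fst j) \<beta> y})"
proof -
  obtain c \<beta> where "(SOME (c, \<beta>). level_cone j c \<beta>) = (c, \<beta>)" by fastforce
  moreover have "level_cone j c \<beta>"
    using someI_ex[of "\<lambda>(c, \<beta>). level_cone j c \<beta>"] level_cone_exists[OF assms] calculation by auto
  ultimately show thesis using that by (simp add: comparison_def)
qed

lemma level_coneD:
  assumes "level_cone j c \<beta>"
  shows "c \<in> Obj I" "\<And>k r. k \<in> fst j \<Longrightarrow> r < n \<Longrightarrow> \<beta> k r \<in> cat_hom I (pow_level k r) c"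
    "\<And>y. y \<in> carrier (pgrp G c) \<Longrightarrow> cone_family (fst j) \<beta> y \<in> compatible_families j"
  using assms by (auto simp: level_cone_def)

lemma germ_eq_families:
  assumes F: "finite F" and c1: "c1 \<in> Obj I" and c2: "c2 \<in> Obj I"
    and h: "\<And>k r. k \<in> F \<Longrightarrow> r < n \<Longrightarrow> germ_eq G (c1, h1 k r) (c2, h2 k r)"
  shows "germ_eq G (c1, \<lambda>y. {\<lambda>k\<in>F. \<lambda>r\<in>{..<n}. h1 k r y}) (c2, \<lambda>y. {\<lambda>k\<in>F. \<lambda>r\<in>{..<n}. h2 k r y})"
proof -
  let ?T = "\<lambda>z. {\<lambda>k\<in>F. \<lambda>r\<in>{..<n}. z (k, r)}"
  have germ: "germ_eq G (c1, \<lambda>y. ?T (\<lambda>s\<in>F \<times> {..<n}. case_prod h1 s y))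
                  (c2, \<lambda>y. ?T (\<lambda>s\<in>F \<times> {..<n}. case_prod h2 s y))"
    using F c1 c2 h by (intro germ_eq_tuple[OF pro_group]) auto
  have eq: "(\<lambda>y. ?T (\<lambda>s\<in>F \<times> {..<n}. case_prod h s y)) = (\<lambda>y. {\<lambda>k\<in>F. \<lambda>r\<in>{..<n}. h k r y})"
    for h
    by (auto intro!: restrict_ext)
  show ?thesis using germ unfolding eq .
qed

lemma comparison_mor: "pro_mor G approx comparison"
proof (rule pro_morI)
  show "category (pidx approx)" using pro_group_category[OF pro_group_approx] .
next
  fix j assume "j \<in> Obj (pidx approx)"
  then have "j \<in> subdiagrams" by simp
  moreover obtain c \<beta> where cone: "level_cone j c \<beta>" and "comparison j = (c, \<lambda>y. {cone_family (fst j) \<beta> y})"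
    using comparison_cone[OF calculation] .
  ultimately show "fst (comparison j) \<in> Obj I \<and> snd (comparison j) \<in> hom (pgrp G (fst (comparison j))) (pgrp approx j)"
    using level_coneD[OF cone] subdiagramsD(2)[OF \<open>j \<in> subdiagrams\<close>]
    by (auto intro!: hom_into_level_group cone_family_hom)
next
  fix v d e assume "v \<in> cat_hom (pidx approx) d e"
  then have v: "v = (d, e)" and d: "d \<in> subdiagrams" and e: "e \<in> subdiagrams"
    and de: "subdiagram_le d e" by (simp_all add: cat_hom_dircat)
  obtain c\<^sub>d \<beta>\<^sub>d where cone\<^sub>d: "level_cone d c\<^sub>d \<beta>\<^sub>d" and d_eq: "comparison d = (c\<^sub>d, \<lambda>y. {cone_family (fst d) \<beta>\<^sub>d y})"
    using comparison_cone[OF d] .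
  obtain c\<^sub>e \<beta>\<^sub>e where cone\<^sub>e: "level_cone e c\<^sub>e \<beta>\<^sub>e" and e_eq: "comparison e = (c\<^sub>e, \<lambda>y. {cone_family (fst e) \<beta>\<^sub>e y})"
    using comparison_cone[OF e] .
  have "germ_eq G (c\<^sub>e, \<lambda>y. {\<lambda>k\<in>fst d. \<lambda>r\<in>{..<n}. pow_map k r (pmap G (\<beta>\<^sub>e k r) y)})
                  (c\<^sub>d, \<lambda>y. {\<lambda>k\<in>fst d. \<lambda>r\<in>{..<n}. pow_map k r (pmap G (\<beta>\<^sub>d k r) y)})"
  proof (rule germ_eq_families[OF subdiagramsD(1)[OF d] level_coneD(1)[OF cone\<^sub>e] level_coneD(1)[OF cone\<^sub>d]])
    fix k r assume k: "k \<in> fst d" and r: "r < n"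
    then have "k \<in> fst e" using de by (auto simp: subdiagram_le_def)
    then show "germ_eq G (c\<^sub>e, \<lambda>y. pow_map k r (pmap G (\<beta>\<^sub>e k r) y)) (c\<^sub>d, \<lambda>y. pow_map k r (pmap G (\<beta>\<^sub>d k r) y))"
      using germ_eq_transition[OF pro_group level_coneD(2)[OF cone\<^sub>e _ r]]
        germ_eq_transition[OF pro_group level_coneD(2)[OF cone\<^sub>d k r]]
      by (blast intro: germ_eq_trans[OF pro_group] germ_eq_sym)
  qed
  moreover have "restrict_family (fst d) (cone_family (fst e) \<beta>\<^sub>e y) =
      (\<lambda>k\<in>fst d. \<lambda>r\<in>{..<n}. pow_map k r (pmap G (\<beta>\<^sub>e k r) y))" for y
    using de by (auto simp: restrict_family_def cone_family_def subdiagram_le_def intro!: restrict_ext)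
  ultimately show "germ_eq G (fst (comparison e), \<lambda>y. pmap approx v (snd (comparison e) y)) (comparison d)"
    by (simp add: v d_eq e_eq cone_family_def)
qed

lemma germ_eq_cone_rotation:
  assumes j: "j \<in> subdiagrams" and cone: "level_cone j c \<beta>" and k: "k \<in> fst j" and r: "r < n"
  shows "germ_eq G (fst (\<phi> c), \<lambda>y. pow_map k r (pmap G (\<beta> k r) (snd (\<phi> c) y)))
                   (c, \<lambda>y. pow_map k (Suc r mod n) (pmap G (\<beta> k (Suc r mod n)) y))"
proof -
  note trans = germ_eq_trans[OF pro_group]
  have k': "k \<in> Obj I" using subdiagramsD(2)[OF j] k by auto
  have r': "Suc r mod n < n" using n_pos by simp
  have "germ_eq G (fst (\<phi> c), \<lambda>y. pow_map k r (pmap G (\<beta> k r) (snd (\<phi> c) y)))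
                  (fst (\<phi> (pow_level k r)), \<lambda>y. pow_map k r (snd (\<phi> (pow_level k r)) y))"
    using germ_eq_postcomp[OF pro_mor_germ_eq[OF endo level_coneD(2)[OF cone k r]]] .
  also have "(fst (\<phi> (pow_level k r)), \<lambda>y. pow_map k r (snd (\<phi> (pow_level k r)) y)) =
             (pow_level k (Suc r), pow_map k (Suc r))"
    by (simp add: pow_level_Suc_right pow_map_Suc_right comp_def)
  also (back_subst) have "germ_eq G \<dots> (pow_level k (Suc r mod n), pow_map k (Suc r mod n))"
    using pow_germ_wrap[OF k' r] .
  also (trans) have "germ_eq G \<dots> (c, \<lambda>y. pow_map k (Suc r mod n) (pmap G (\<beta> k (Suc r mod n)) y))"
    using germ_eq_sym[OF germ_eq_transition[OF pro_group level_coneD(2)[OF cone k r']]] .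
  finally (trans) show ?thesis .
qed

lemma comparison_commutes: "pro_eq G approx (pro_comp comparison \<phi>) (pro_comp (\<lambda>j. (j, rotate j)) comparison)"
  unfolding pro_eq_def
proof
  fix j assume "j \<in> Obj (pidx approx)"
  then have j: "j \<in> subdiagrams" by simp
  obtain c \<beta> where cone: "level_cone j c \<beta>" and cj: "comparison j = (c, \<lambda>y. {cone_family (fst j) \<beta> y})"
    using comparison_cone[OF j] .
  have "germ_eq G (fst (\<phi> c), \<lambda>y. {\<lambda>k\<in>fst j. \<lambda>r\<in>{..<n}. pow_map k r (pmap G (\<beta> k r) (snd (\<phi> c) y))})
      (c, \<lambda>y. {\<lambda>k\<in>fst j. \<lambda>r\<in>{..<n}. pow_map k (Suc r mod n) (pmap G (\<beta> k (Suc r mod n)) y)})"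
    using germ_eq_cone_rotation[OF j cone] level_coneD(1)[OF cone]
    by (intro germ_eq_families subdiagramsD(1)[OF j] endo_obj) auto
  moreover have "rotate_family (fst j) (cone_family (fst j) \<beta> y) =
      (\<lambda>k\<in>fst j. \<lambda>r\<in>{..<n}. pow_map k (Suc r mod n) (pmap G (\<beta> k (Suc r mod n)) y))" for y
    using n_pos by (auto simp: rotate_family_def cone_family_def intro!: restrict_ext)
  ultimately show "germ_eq G (pro_comp comparison \<phi> j) (pro_comp (\<lambda>j. (j, rotate j)) comparison j)"
    by (simp add: pro_comp_def cj rotate_def cone_family_def comp_def)
qed

subsection \<open>The inverse comparison map\<close>

definition projection :: "'i \<Rightarrow> ('i set \<times> 'm set) \<times> (('i \<Rightarrow> nat \<Rightarrow> 'a) set \<Rightarrow> 'a)" where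
  "projection i = (({i}, {}), \<lambda>P. the_elem P i 0)"

lemma singleton_subdiagram: "i \<in> Obj I \<Longrightarrow> ({i}, {}) \<in> subdiagrams"
  by (simp add: subdiagrams_def)

lemma projection_mor: "pro_mor approx G projection"
proof (rule pro_morI[OF category])
  fix i assume i: "i \<in> Obj I"
  have "(\<lambda>P. the_elem P i 0) \<in> hom (level_group ({i}, {})) (pgrp G i)"
    using n_pos by (intro hom_from_level_group families_coordinate_hom) auto
  then show "fst (projection i) \<in> Obj (pidx approx) \<and>
             snd (projection i) \<in> hom (pgrp approx (fst (projection i))) (pgrp G i)"
    using singleton_subdiagram[OF i] by (simp add: projection_def)
next
  fix v d e assume v: "v \<in> cat_hom I d e"
  have d: "d \<in> Obj I" and e: "e \<in> Obj I" using category_hom_objs[OF category v] by auto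
  let ?k = "({d, e}, {v})"
  have "?k \<in> subdiagrams" using v d e by (simp add: subdiagrams_def cat_hom_def)
  then have de: "(({d}, {}), ?k) \<in> cat_hom (pidx approx) ({d}, {}) ?k"
    and ee: "(({e}, {}), ?k) \<in> cat_hom (pidx approx) ({e}, {}) ?k"
    using singleton_subdiagram[OF d] singleton_subdiagram[OF e] by (simp_all add: cat_hom_dircat subdiagram_le_def)
  have "germ_eq approx (({e}, {}), \<lambda>P. pmap G v (the_elem P e 0)) (({d}, {}), \<lambda>P. the_elem P d 0)"
  proof (rule germ_eqI[OF ee de])
    fix P assume "P \<in> carrier (pgrp approx ?k)"
    then obtain x where "x \<in> compatible_families ?k" "P = {x}" by (auto simp: carrier_level_group)
    then show "pmap G v (the_elem (pmap approx (({e}, {}), ?k) P) e 0) = the_elem (pmap approx (({d}, {}), ?k) P) d 0"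
      using v n_pos by (simp add: compatible_families_def restrict_family_def cat_hom_def)
  qed
  then show "germ_eq approx (fst (projection e), \<lambda>P. pmap G v (snd (projection e) P)) (projection d)"
    by (simp add: projection_def)
qed

lemma projection_comparison: "pro_eq G G (pro_comp projection comparison) pro_id"
  unfolding pro_eq_def
proof
  fix i assume i: "i \<in> Obj I"
  obtain c \<beta> where cone: "level_cone ({i}, {}) c \<beta>"
    and ci: "comparison ({i}, {}) = (c, \<lambda>y. {cone_family {i} \<beta> y})"
    using comparison_cone[OF singleton_subdiagram[OF i]] by auto
  have "\<beta> i 0 \<in> cat_hom I i c" using level_coneD(2)[OF cone, of i 0] n_pos by simp
  then have "germ_eq G (c, \<lambda>y. id (pmap G (\<beta> i 0) y)) (i, id)"
    by (rule germ_eq_transition[OF pro_group])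
  then show "germ_eq G (pro_comp projection comparison i) (pro_id i)"
    using n_pos by (simp add: pro_comp_def projection_def ci cone_family_def pro_id_def comp_def)
qed

lemma compatible_family_orbit:
  assumes x: "x \<in> compatible_families j" and r: "r < n" and orbit: "pow_level k ` {..r} \<subseteq> fst j"
  shows "x k r = pow_map k r (x (pow_level k r) 0)"
  using r orbit
proof (induction r arbitrary: k)
  case 0
  then show ?case by simp
next
  case (Suc r)
  have k: "k \<in> fst j" and \<phi>k: "fst (\<phi> k) \<in> fst j"
    using Suc.prems(2) image_eqI[of _ "pow_level k" 0] image_eqI[of _ "pow_level k" 1]
    by (auto simp: pow_level_Suc)
  have orbit': "pow_level (fst (\<phi> k)) ` {..r} \<subseteq> fst j"
    using Suc.prems(2) by (auto simp: pow_level_Suc[symmetric])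
  have "x k (Suc r) = snd (\<phi> k) (x (fst (\<phi> k)) r)"
    using x k \<phi>k Suc.prems(1) by (simp add: compatible_families_def)
  also have "\<dots> = snd (\<phi> k) (pow_map (fst (\<phi> k)) r (x (pow_level (fst (\<phi> k)) r) 0))"
    using Suc.IH[OF _ orbit'] Suc.prems(1) by simp
  finally show ?case by (simp add: pow_level_Suc pow_map_Suc)
qed

text \<open>Enlarging \<open>j\<close> by the level of a cone, its arrows and the orbits under \<open>\<phi>\<close> gives a
  subdiagram on which every compatible family is determined by its entry at \<open>(c, 0)\<close>.\<close>

definition cone_closure :: "'i set \<times> 'm set \<Rightarrow> 'i \<Rightarrow> ('i \<Rightarrow> nat \<Rightarrow> 'm) \<Rightarrow> 'i set \<times> 'm set" where
  "cone_closure j c \<beta> = (fst j \<union> {c} \<union> (\<Union>k\<in>fst j. pow_level k ` {..<n}),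
                         snd j \<union> (\<lambda>(k, r). \<beta> k r) ` (fst j \<times> {..<n}))"

lemma cone_closure_subdiagram:
  assumes j: "j \<in> subdiagrams" and cone: "level_cone j c \<beta>"
  shows "cone_closure j c \<beta> \<in> subdiagrams"
proof -
  obtain F M where FM: "j = (F, M)" by fastforce
  have F: "finite F" "F \<subseteq> Obj I" and M: "finite M" "M \<subseteq> Arr I" "\<forall>v\<in>M. Dom I v \<in> F \<and> Cod I v \<in> F"
    using j by (simp_all add: subdiagrams_def FM)
  have \<beta>: "\<beta> k r \<in> Arr I \<and> Dom I (\<beta> k r) = pow_level k r \<and> Cod I (\<beta> k r) = c" if "k \<in> F" "r < n" for k r
    using level_coneD(2)[OF cone] that by (simp add: FM cat_hom_def)
  show ?thesis
    unfolding subdiagrams_def cone_closure_def FM fst_conv snd_conv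
    using F M \<beta> level_coneD(1)[OF cone] pow_level_obj by (auto 0 4)
qed

lemma cone_family_of_closure:
  assumes j: "j \<in> subdiagrams" and cone: "level_cone j c \<beta>"
    and x: "x \<in> compatible_families (cone_closure j c \<beta>)"
  shows "cone_family (fst j) \<beta> (x c 0) = restrict_family (fst j) x"
proof -
  have "pow_map k r (pmap G (\<beta> k r) (x c 0)) = x k r" if k: "k \<in> fst j" and r: "r < n" for k r
  proof -
    have "\<beta> k r \<in> snd (cone_closure j c \<beta>)" using k r by (auto simp: cone_closure_def)
    then have "pmap G (\<beta> k r) (x c 0) = x (pow_level k r) 0"
      using x level_coneD(2)[OF cone k r] n_pos by (auto simp: compatible_families_def cat_hom_def)
    moreover have "pow_level k ` {..r} \<subseteq> fst (cone_closure j c \<beta>)"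
      using k r by (auto simp: cone_closure_def)
    ultimately show ?thesis using compatible_family_orbit[OF x r] by simp
  qed
  then show ?thesis by (auto simp: cone_family_def restrict_family_def intro!: restrict_ext)
qed

lemma comparison_projection: "pro_eq approx approx (pro_comp comparison projection) pro_id"
  unfolding pro_eq_def
proof
  fix j assume "j \<in> Obj (pidx approx)"
  then have j: "j \<in> subdiagrams" by simp
  obtain c \<beta> where cone: "level_cone j c \<beta>" and cj: "comparison j = (c, \<lambda>y. {cone_family (fst j) \<beta> y})"
    using comparison_cone[OF j] .
  let ?k = "cone_closure j c \<beta>"
  have k: "?k \<in> subdiagrams" using cone_closure_subdiagram[OF j cone] .
  have ck: "(({c}, {}), ?k) \<in> cat_hom (pidx approx) ({c}, {}) ?k"
    using k singleton_subdiagram[OF level_coneD(1)[OF cone]]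
    by (simp add: cat_hom_dircat subdiagram_le_def cone_closure_def)
  have jk: "(j, ?k) \<in> cat_hom (pidx approx) j ?k"
    using k j by (auto simp: cat_hom_dircat subdiagram_le_def cone_closure_def)
  have "germ_eq approx (({c}, {}), \<lambda>P. {cone_family (fst j) \<beta> (the_elem P c 0)}) (j, id)"
  proof (rule germ_eqI[OF ck jk])
    fix P assume "P \<in> carrier (pgrp approx ?k)"
    then obtain x where "x \<in> compatible_families ?k" "P = {x}" by (auto simp: carrier_level_group)
    then show "{cone_family (fst j) \<beta> (the_elem (pmap approx (({c}, {}), ?k) P) c 0)} = id (pmap approx (j, ?k) P)"
      using cone_family_of_closure[OF j cone] n_pos by (simp add: restrict_family_def)
  qed
  then show "germ_eq approx (pro_comp comparison projection j) (pro_id j)"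
    by (simp add: pro_comp_def projection_def cj pro_id_def comp_def)
qed

end

theorem mainTheorem7:
  fixes G :: "('i,'m,'a) pro_obj" and \<phi> :: "'i \<Rightarrow> 'i \<times> ('a \<Rightarrow> 'a)" and n :: nat
  assumes "pro_group G"
    and "pro_iso G G \<phi>"
    and "n \<ge> 1"
    and "pro_eq G G (pro_pow \<phi> n) pro_id"
  shows "\<exists>(J :: ('i set \<times> 'm set) set) leq
           (G' :: ('i set \<times> 'm set, ('i set \<times> 'm set) \<times> ('i set \<times> 'm set), ('i \<Rightarrow> nat \<Rightarrow> 'a) set) pro_obj)
           \<psi> \<theta>.
     directed_set J leq \<and> pidx G' = dircat J leq \<and> pro_group G' \<and>
     (\<forall>j\<in>J. \<psi> j \<in> iso (pgrp G' j) (pgrp G' j) \<and>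
             (\<forall>x\<in>carrier (pgrp G' j). (\<psi> j ^^ n) x = x)) \<and>
     (\<forall>a\<in>J. \<forall>b\<in>J. leq a b \<longrightarrow>
        (\<forall>x\<in>carrier (pgrp G' b). pmap G' (a,b) (\<psi> b x) = \<psi> a (pmap G' (a,b) x))) \<and>
     pro_iso G G' \<theta> \<and>
     pro_eq G G' (pro_comp \<theta> \<phi>) (pro_comp (\<lambda>j. (j, \<psi> j)) \<theta>)"
proof -
  have "pro_mor G G \<phi>" using assms(2) by (simp add: pro_iso_def)
  then interpret periodic_pro_endo G \<phi> n using assms by unfold_locales
  show ?thesis
  proof (intro exI conjI)
    show "directed_set subdiagrams subdiagram_le" by (rule directed_subdiagrams)
    show "pidx approx = dircat subdiagrams subdiagram_le" by simp
    show "pro_group approx" by (rule pro_group_approx)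
    show "\<forall>j\<in>subdiagrams. rotate j \<in> iso (pgrp approx j) (pgrp approx j) \<and>
            (\<forall>P\<in>carrier (pgrp approx j). (rotate j ^^ n) P = P)"
      using rotate_iso funpow_rotate_n by simp
    show "\<forall>a\<in>subdiagrams. \<forall>b\<in>subdiagrams. subdiagram_le a b \<longrightarrow>
            (\<forall>P\<in>carrier (pgrp approx b). pmap approx (a, b) (rotate b P) = rotate a (pmap approx (a, b) P))"
      using rotate_restrict by simp
    show "pro_iso G approx comparison"
      unfolding pro_iso_def
      using comparison_mor projection_mor projection_comparison comparison_projection by blast
    show "pro_eq G approx (pro_comp comparison \<phi>) (pro_comp (\<lambda>j. (j, rotate j)) comparison)"
      by (rule comparison_commutes)
  qed
qed

end
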